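(* Let $n\ge 1$, $0<m\le L$, $\kappa=L/m$, and let $(\alpha,\beta,\gamma)$ be constant parameters such that the two-step momentum algorithm converges linearly with rate $\rho=1-1/T_s\in(0,1)$ for all $f\in\mathcal{Q}_m^L$. Then for every $f\in\mathcal{Q}_m^L$ the noise amplification satisfies $$J\;\le\;\frac{\sigma_w^2(1+\rho^2)}{(1+\rho)^3}\,n\,T_s^3 .$$ Furthermore, for the gradient noise model ($\sigma_w=\alpha\sigma$), $$J\;\le\;\frac{\sigma^2(1+\rho)(1+\rho^2)}{L^2}\,n\,T_s^3 .$$
   Context: $\mathcal{Q}_m^L$ is the class of quadratic functions $f(x)=\tfrac12x^TQx-q^Tx$ on $\mathbb{R}^n$ with $q\in\mathbb{R}^n$, $Q=Q^T\succ0$ whose largest eigenvalue is $L$ and smallest is $m$; $x^\star$ is the minimizer. The noisy two-step momentum algorithm with constant parameters $(\alpha,\beta,\gamma)$ is $x^{t+2}=x^{t+1}+\beta(x^{t+1}-x^t)-\alpha\nabla f\big(x^{t+1}+\gamma(x^{t+1}-x^t)\big)+\sigma_w w^t$, where $w^t$ is white noise with $\mathbb{E}[w^t]=0$, $\mathbb{E}[w^t(w^\tau)^T]=I\,\delta(t-\tau)$ ($\delta$ the Kronecker delta). In the iterate noise model $\sigma_w=\sigma$, in the gradient noise model $\sigma_w=\alpha\sigma$, with $\sigma>0$. With $\psi^t=[(x^t-x^\star)^T,(x^{t+1}-x^\star)^T]^T$ one has $\psi^{t+1}=A\psi^t+Bw^t$, $A=\begin{bmatrix}0&I\\-\beta I+\gamma\alpha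 Q&(1+\beta)I-(1+\gamma)\alpha Q\end{bmatrix}$, $B^T=[0\;\;\sigma_wI]$. The algorithm converges linearly with rate $\rho$ for all $f\in\mathcal{Q}_m^L$ if the spectral radius of $A$ is at most $\rho$ for every $f\in\mathcal{Q}_m^L$ (the spectral radius of $A$ is the best achievable linear rate in the noiseless case). The settling time is $T_s=1/(1-\rho)$. The noise amplification is $J=\lim_{t\to\infty}\frac1t\sum_{k=0}^t\mathbb{E}\|x^k-x^\star\|_2^2$. *)

theory Defs
  imports "HOL-Probability.Probability"
begin

definition real_eigenvalue :: "real^'n^'n \<Rightarrow> real \<Rightarrow> bool" where
  "real_eigenvalue Q l \<longleftrightarrow> (\<exists>v. v \<noteq> 0 \<and> Q *v v = l *s v)"

definition cplx_eigenvalue :: "complex^'k^'k \<Rightarrow> complex \<Rightarrow> bool" where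
  "cplx_eigenvalue A c \<longleftrightarrow> (\<exists>v. v \<noteq> 0 \<and> A *v v = c *s v)"

definition spectral_rad :: "complex^'k^'k \<Rightarrow> real" where
  "spectral_rad A = Sup {cmod c | c. cplx_eigenvalue A c}"

definition in_QmL :: "real \<Rightarrow> real \<Rightarrow> real^'n^'n \<Rightarrow> bool" where
  "in_QmL m L Q \<longleftrightarrow> transpose Q = Q \<and> (\<forall>x. x \<noteq> 0 \<longrightarrow> x \<bullet> (Q *v x) > 0) \<and>
     real_eigenvalue Q L \<and> (\<forall>l. real_eigenvalue Q l \<longrightarrow> l \<le> L) \<and>
     real_eigenvalue Q m \<and> (\<forall>l. real_eigenvalue Q l \<longrightarrow> m \<le> l)"

definition quad_f :: "real^'n^'n \<Rightarrow> real^'n \<Rightarrow> real^'n \<Rightarrow> real" where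
  "quad_f Q q x = (1/2) * (x \<bullet> (Q *v x)) - q \<bullet> x"

text \<open>The 2n x 2n state matrix A of the two-step momentum method (complexified so that its
  spectral radius can be taken); the first block (Inl) is x^t, the second (Inr) is x^(t+1).\<close>
definition momA :: "real \<Rightarrow> real \<Rightarrow> real \<Rightarrow> real^'n^'n \<Rightarrow> complex^('n + 'n)^('n + 'n)" where
  "momA \<alpha> \<beta> \<gamma> Q = (\<chi> i j. case (i, j) of
      (Inl a, Inl b) \<Rightarrow> 0
    | (Inl a, Inr b) \<Rightarrow> (if a = b then 1 else 0)
    | (Inr a, Inl b) \<Rightarrow> complex_of_real (- \<beta> * (if a = b then 1 else 0) + \<gamma> * \<alpha> * Q $ a $ b)
    | (Inr a, Inr b) \<Rightarrow> complex_of_real ((1 + \<beta>) * (if a = b then 1 else 0) - (1 + \<gamma>) * \<alpha> * Q $ a $ b))"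

definition noise_amplification :: "'w measure \<Rightarrow> (nat \<Rightarrow> 'w \<Rightarrow> real^'n) \<Rightarrow> real^'n \<Rightarrow> real" where
  "noise_amplification M x xs =
     lim (\<lambda>t. (1 / real t) * (\<Sum>k\<le>t. integral\<^sup>L M (\<lambda>\<omega>. (norm (x k \<omega> - xs))\<^sup>2)))"

end

theory Submission
  imports Defs
begin

text \<open>
  Diagonalise \<open>Q\<close> in an orthonormal eigenbasis. Along an eigenvector with eigenvalue \<open>\<lambda>\<close> the
  error obeys a scalar recurrence \<open>y(t+2) = c y(t+1) - d y(t) + \<sigma>\<^sub>w \<xi>(t)\<close> driven by white
  noise, where \<open>z\<^sup>2 - c z + d\<close> is the characteristic polynomial of the corresponding
  \<open>2 \<times> 2\<close> block of \<open>A\<close>. The mean square of \<open>y\<close> tends to \<open>\<sigma>\<^sub>w\<^sup>2 \<Sum>\<^sub>t h(t)\<^sup>2\<close> for the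
  impulse response \<open>h\<close>, and a Lyapunov function of the companion matrix evaluates this
  energy exactly as \<open>(1 + d) / ((1 - d)((1 + d)\<^sup>2 - c\<^sup>2))\<close>. The rate assumption puts both roots
  in the closed disc of radius \<open>\<rho>\<close>, i.e. \<open>\<bar>d\<bar> \<le> \<rho>\<^sup>2\<close> and \<open>\<rho> \<bar>c\<bar> \<le> \<rho>\<^sup>2 + d\<close>, which
  bounds the energy by \<open>(1 + \<rho>\<^sup>2) / (1 - \<rho>\<^sup>2)\<^sup>3\<close>. Summing over the \<open>n\<close> modes and
  passing to Cesaro means gives the first bound. For gradient noise, \<open>1 - c + d = \<alpha> \<lambda>\<close> is the
  characteristic polynomial at \<open>1\<close>, so \<open>\<alpha> L \<le> (1 + \<rho>)\<^sup>2\<close>.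
\<close>

section \<open>Second-order linear recurrences\<close>

fun lin_rec2 :: "real \<Rightarrow> real \<Rightarrow> real \<Rightarrow> real \<Rightarrow> nat \<Rightarrow> real" where
  "lin_rec2 c d a0 a1 0 = a0"
| "lin_rec2 c d a0 a1 (Suc 0) = a1"
| "lin_rec2 c d a0 a1 (Suc (Suc n)) = c * lin_rec2 c d a0 a1 (Suc n) - d * lin_rec2 c d a0 a1 n"

(* Jury's criterion: both roots of z^2 - c z + d lie in the open unit disc. *)
definition schur_stable2 :: "real \<Rightarrow> real \<Rightarrow> bool" where
  "schur_stable2 c d \<longleftrightarrow> \<bar>d\<bar> < 1 \<and> \<bar>c\<bar> < 1 + d"

definition lyap2_decay :: "real \<Rightarrow> real \<Rightarrow> real" where
  "lyap2_decay c d = (1 - d) * ((1 + d)^2 - c^2)"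

(* The solution P of the discrete Lyapunov equation P - A^T P A = lyap2_decay c d * e_1 e_1^T
   for the companion matrix A of z^2 - c z + d, as a quadratic form in two consecutive terms. *)
definition lyap2 :: "real \<Rightarrow> real \<Rightarrow> real \<Rightarrow> real \<Rightarrow> real" where
  "lyap2 c d a b = (lyap2_decay c d + d^2 * (1 + d)) * a^2 - 2 * c * d * a * b + (1 + d) * b^2"

definition impulse_energy :: "real \<Rightarrow> real \<Rightarrow> real" where
  "impulse_energy c d = (1 + d) / lyap2_decay c d"

lemma schur_stable2D:
  assumes "schur_stable2 c d"
  shows "0 < 1 + d" "0 < 1 - d" "0 < (1 + d)^2 - c^2" "0 < lyap2_decay c d"
proof -
  show d: "0 < 1 + d" "0 < 1 - d" using assms unfolding schur_stable2_def by linarith+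
  have "\<bar>c\<bar> < \<bar>1 + d\<bar>" using assms d(1) unfolding schur_stable2_def by simp
  then have "c^2 < (1 + d)^2" using abs_le_square_iff[of "1 + d" c] by linarith
  then show "0 < (1 + d)^2 - c^2" by simp
  with d show "0 < lyap2_decay c d" unfolding lyap2_decay_def by simp
qed

lemma lyap2_step: "lyap2 c d b (c * b - d * a) = lyap2 c d a b - lyap2_decay c d * a^2"
  unfolding lyap2_def lyap2_decay_def by (simp add: algebra_simps power2_eq_square)

lemma lyap2_nonneg:
  assumes "schur_stable2 c d"
  shows "0 \<le> lyap2 c d a b"
proof -
  note stable = schur_stable2D[OF assms]
  have "(1 + d) * lyap2 c d a b
      = ((1 + d) * b - c * d * a)^2 + ((1 + d) * lyap2_decay c d + d^2 * ((1 + d)^2 - c^2)) * a^2"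
    unfolding lyap2_def lyap2_decay_def by (simp add: algebra_simps power2_eq_square)
  also have "\<dots> \<ge> 0"
    using stable by (intro add_nonneg_nonneg[OF zero_le_power2] mult_nonneg_nonneg) auto
  finally show ?thesis using stable(1) by (simp add: zero_le_mult_iff)
qed

lemma lyap2_telescope:
  "lyap2_decay c d * (\<Sum>t<N. (lin_rec2 c d a0 a1 t)^2)
     + lyap2 c d (lin_rec2 c d a0 a1 N) (lin_rec2 c d a0 a1 (Suc N)) = lyap2 c d a0 a1"
proof (induction N)
  case (Suc N)
  then show ?case using lyap2_step[of c d "lin_rec2 c d a0 a1 (Suc N)" "lin_rec2 c d a0 a1 N"]
    by (simp add: algebra_simps)
qed simp

lemma lin_rec2_squares_sums:
  assumes "schur_stable2 c d"
  shows "(\<lambda>t. (lin_rec2 c d a0 a1 t)^2) sums (lyap2 c d a0 a1 / lyap2_decay c d)"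
proof -
  let ?y = "lin_rec2 c d a0 a1"
  have D: "0 < lyap2_decay c d" using schur_stable2D[OF assms] by simp
  have partial: "(\<Sum>t<N. (?y t)^2) = (lyap2 c d a0 a1 - lyap2 c d (?y N) (?y (Suc N))) / lyap2_decay c d"
    for N using lyap2_telescope[of c d a0 a1 N] D by (simp add: field_simps)
  have "summable (\<lambda>t. (?y t)^2)"
    by (rule summableI_nonneg_bounded[where x = "lyap2 c d a0 a1 / lyap2_decay c d"])
      (use D lyap2_nonneg[OF assms] in \<open>auto simp: partial divide_right_mono\<close>)
  then have "(\<lambda>t. sqrt ((?y t)^2)) \<longlonglongrightarrow> sqrt 0"
    by (intro tendsto_real_sqrt summable_LIMSEQ_zero)
  then have "?y \<longlonglongrightarrow> 0" by (simp add: tendsto_rabs_zero_iff)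
  then have "(\<lambda>N. lyap2 c d (?y N) (?y (Suc N))) \<longlonglongrightarrow> lyap2 c d 0 0"
    unfolding lyap2_def by (intro tendsto_intros LIMSEQ_Suc)
  then have "(\<lambda>N. (lyap2 c d a0 a1 - lyap2 c d (?y N) (?y (Suc N))) / lyap2_decay c d)
      \<longlonglongrightarrow> (lyap2 c d a0 a1 - lyap2 c d 0 0) / lyap2_decay c d"
    using D by (intro tendsto_divide tendsto_diff tendsto_const) simp_all
  then show ?thesis unfolding sums_def partial by (simp add: lyap2_def)
qed

lemma impulse_response_sums:
  assumes "schur_stable2 c d"
  shows "(\<lambda>t. (lin_rec2 c d 0 1 t)^2) sums impulse_energy c d"
  using lin_rec2_squares_sums[OF assms, of 0 1] by (simp add: lyap2_def impulse_energy_def)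

section \<open>Quadratics with roots in a disc\<close>

lemma real_roots_coeff_bounds:
  fixes z1 z2 \<rho> :: real
  assumes "\<bar>z1\<bar> \<le> \<rho>" "\<bar>z2\<bar> \<le> \<rho>"
  shows "\<bar>z1 * z2\<bar> \<le> \<rho>^2" "\<rho> * \<bar>z1 + z2\<bar> \<le> \<rho>^2 + z1 * z2"
proof -
  show "\<bar>z1 * z2\<bar> \<le> \<rho>^2"
    unfolding abs_mult power2_eq_square using assms by (intro mult_mono) auto
  have "0 \<le> (\<rho> - z1) * (\<rho> - z2)" "0 \<le> (\<rho> + z1) * (\<rho> + z2)"
    using assms by (intro mult_nonneg_nonneg; simp add: abs_le_iff)+
  then show "\<rho> * \<bar>z1 + z2\<bar> \<le> \<rho>^2 + z1 * z2"
    by (cases "0 \<le> z1 + z2") (simp_all add: algebra_simps power2_eq_square)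
qed

lemma quadratic_roots_in_disc_coeff_bounds:
  fixes c d \<rho> :: real
  assumes "0 < \<rho>" and roots: "\<And>z::complex. z^2 - of_real c * z + of_real d = 0 \<Longrightarrow> cmod z \<le> \<rho>"
  shows "\<bar>d\<bar> \<le> \<rho>^2" "\<rho> * \<bar>c\<bar> \<le> \<rho>^2 + d"
proof -
  have "\<bar>d\<bar> \<le> \<rho>^2 \<and> \<rho> * \<bar>c\<bar> \<le> \<rho>^2 + d"
  proof (cases "0 \<le> c^2 - 4 * d")
    case True
    define s where "s = sqrt (c^2 - 4 * d)"
    have s2: "s^2 = c^2 - 4 * d" unfolding s_def using True by simp
    have root: "\<bar>z\<bar> \<le> \<rho>" if "z = (c + s) / 2 \<or> z = (c - s) / 2" for z
    proof -
      have "z^2 - c * z + d = 0"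
        using that s2 by (elim disjE; hypsubst; simp add: field_simps power2_eq_square)
      then have "(complex_of_real z)^2 - of_real c * of_real z + of_real d = 0"
        by (metis of_real_0 of_real_add of_real_diff of_real_mult of_real_power)
      then show ?thesis using roots by fastforce
    qed
    have vieta: "(c + s) / 2 * ((c - s) / 2) = d" "(c + s) / 2 + (c - s) / 2 = c"
      using s2 by (simp_all add: field_simps power2_eq_square)
    have "\<bar>(c + s) / 2\<bar> \<le> \<rho>" "\<bar>(c - s) / 2\<bar> \<le> \<rho>"
      using root[of "(c + s) / 2"] root[of "(c - s) / 2"] by simp_all
    from real_roots_coeff_bounds[OF this, unfolded vieta] show ?thesis by blast
  next
    case False
    define s where "s = sqrt (4 * d - c^2)"
    have s2: "s^2 = 4 * d - c^2" unfolding s_def using False by simp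
    define z where "z = Complex (c / 2) (s / 2)"
    have "z^2 - of_real c * z + of_real d = 0"
      unfolding z_def using s2 by (simp add: complex_eq_iff power2_eq_square field_simps)
    then have "(cmod z)^2 \<le> \<rho>^2" by (intro power_mono roots) auto
    moreover have "(cmod z)^2 = d"
      unfolding z_def cmod_power2 using s2 by (simp add: power2_eq_square field_simps)
    ultimately have d: "0 \<le> d" "d \<le> \<rho>^2" by (metis zero_le_power2)+
    \<comment> \<open>complex roots: \<open>\<rho> \<bar>c\<bar> \<le> 2 \<rho> sqrt d \<le> \<rho>^2 + d\<close>\<close>
    have "(\<rho> * \<bar>c\<bar>)^2 \<le> \<rho>^2 * (4 * d)"
      using False by (simp add: power_mult_distrib mult_left_mono)
    also have "\<dots> \<le> (\<rho>^2 + d)^2"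
      using zero_le_power2[of "\<rho>^2 - d"] by (simp add: power2_eq_square algebra_simps)
    finally have "(\<rho> * \<bar>c\<bar>)^2 \<le> (\<rho>^2 + d)^2" .
    then have "\<rho> * \<bar>c\<bar> \<le> \<rho>^2 + d" by (rule power2_le_imp_le) (use d in simp)
    then show ?thesis using d by simp
  qed
  then show "\<bar>d\<bar> \<le> \<rho>^2" "\<rho> * \<bar>c\<bar> \<le> \<rho>^2 + d" by auto
qed

lemma root_bounds_schur_stable2:
  fixes c d \<rho> :: real
  assumes r: "0 < \<rho>" "\<rho> < 1" and hd: "\<bar>d\<bar> \<le> \<rho>^2" and hc: "\<rho> * \<bar>c\<bar> \<le> \<rho>^2 + d"
  shows "schur_stable2 c d"
proof -
  have "\<rho>^2 < \<rho>" using mult_strict_left_mono[OF r(2) r(1)] by (simp add: power2_eq_square)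
  moreover have "\<rho>^2 < 1" using calculation r(2) by linarith
  moreover have "\<rho> * \<bar>c\<bar> < \<rho> * (1 + d)"
  proof -
    have "0 < (1 - \<rho>) * (\<rho> - d)"
      using r hd \<open>\<rho>^2 < \<rho>\<close> by (intro mult_pos_pos) auto
    then show ?thesis using hc by (simp add: algebra_simps power2_eq_square)
  qed
  ultimately show ?thesis using hd r unfolding schur_stable2_def by auto
qed

lemma root_bounds_margin:
  fixes c d \<rho> :: real
  assumes r: "0 < \<rho>" "\<rho> < 1" and hd: "\<bar>d\<bar> \<le> \<rho>^2" and hc: "\<rho> * \<bar>c\<bar> \<le> \<rho>^2 + d"
  shows "(1 - \<rho>^2)^2 \<le> (1 + d)^2 - c^2"
proof -
  have r2: "\<rho>^2 < 1" using r by (simp add: power_less_one_iff)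
  have "\<rho>^2 * c^2 \<le> (\<rho>^2 + d)^2"
    using power_mono[OF hc, of 2] r by (simp add: power_mult_distrib)
  moreover have "d^2 \<le> (\<rho>^2)^2" using power_mono[of "\<bar>d\<bar>" "\<rho>^2" 2] hd by simp
  then have "(1 - \<rho>^2) * (\<rho>^2 - (\<rho>^2)^2) \<le> (1 - \<rho>^2) * (\<rho>^2 - d^2)"
    using r2 by (intro mult_left_mono) auto
  ultimately have "\<rho>^2 * (1 - \<rho>^2)^2 \<le> \<rho>^2 * ((1 + d)^2 - c^2)"
    by (simp add: algebra_simps power2_eq_square)
  then show ?thesis using r by simp
qed

lemma impulse_energy_le_root_bound:
  fixes c d \<rho> :: real
  assumes r: "0 < \<rho>" "\<rho> < 1" and hd: "\<bar>d\<bar> \<le> \<rho>^2" and hc: "\<rho> * \<bar>c\<bar> \<le> \<rho>^2 + d"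
  shows "impulse_energy c d \<le> (1 + \<rho>^2) / (1 - \<rho>^2)^3"
proof -
  have r2: "0 < 1 - \<rho>^2" using r by (simp add: power_less_one_iff)
  have m: "(1 - \<rho>^2)^2 \<le> (1 + d)^2 - c^2" by (rule root_bounds_margin[OF assms])
  have d: "0 < 1 + d" "0 < 1 - d" using schur_stable2D[OF root_bounds_schur_stable2[OF assms]] by auto
  have "impulse_energy c d \<le> (1 + d) / ((1 - d) * (1 - \<rho>^2)^2)"
    unfolding impulse_energy_def lyap2_decay_def
    using d m r2 order.strict_trans2[OF zero_less_power[OF r2] m]
    by (intro divide_left_mono mult_left_mono mult_pos_pos) auto
  also have "\<dots> = (1 + d) / (1 - d) / (1 - \<rho>^2)^2" by simp
  also have "\<dots> \<le> (1 + \<rho>^2) / (1 - \<rho>^2) / (1 - \<rho>^2)^2"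
  proof (intro divide_right_mono)
    have "(1 + d) * (1 - \<rho>^2) \<le> (1 + \<rho>^2) * (1 - d)" using hd by (simp add: algebra_simps)
    then show "(1 + d) / (1 - d) \<le> (1 + \<rho>^2) / (1 - \<rho>^2)" using d r2 by (simp add: divide_simps)
  qed simp
  also have "\<dots> = (1 + \<rho>^2) / (1 - \<rho>^2)^3" by (simp add: power_Suc field_simps eval_nat_numeral)
  finally show ?thesis .
qed

(* 1 - c + d is the characteristic polynomial at z = 1, i.e. the product of the distances of its roots from 1. *)
lemma root_bounds_char_at_one:
  fixes c d \<rho> :: real
  assumes r: "0 < \<rho>" "\<rho> < 1" and hd: "\<bar>d\<bar> \<le> \<rho>^2" and hc: "\<rho> * \<bar>c\<bar> \<le> \<rho>^2 + d"
  shows "0 \<le> 1 - c + d" "1 - c + d \<le> (1 + \<rho>)^2"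
proof -
  have "\<rho>^2 < \<rho>" using mult_strict_left_mono[OF r(2) r(1)] by (simp add: power2_eq_square)
  have "\<bar>c\<bar> \<le> \<rho> + d / \<rho>" using hc r by (simp add: field_simps power2_eq_square)
  moreover have "d / \<rho> \<le> \<rho>" using hd r by (simp add: field_simps power2_eq_square)
  moreover have "0 \<le> (1 - \<rho>) * (\<rho> - d) / \<rho>"
    using r hd \<open>\<rho>^2 < \<rho>\<close> by (intro divide_nonneg_pos mult_nonneg_nonneg) auto
  moreover have "(1 - \<rho>) * (\<rho> - d) / \<rho> = 1 + d - \<rho> - d / \<rho>" using r by (simp add: field_simps)
  ultimately show "0 \<le> 1 - c + d" "1 - c + d \<le> (1 + \<rho>)^2"
    using hd by (auto simp: power2_eq_square algebra_simps abs_le_iff)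
qed

section \<open>Symmetric matrices\<close>

lemma linear_coeff_zero_of_quadratic_nonpos:
  fixes a K :: real
  assumes "\<And>t. 2 * t * a + t^2 * K \<le> 0"
  shows "a = 0"
proof -
  define k where "k = \<bar>K\<bar> + 1"
  have k: "0 < k" "0 < 2 * k + K" unfolding k_def by (cases "K \<ge> 0"; simp)+
  have "k^2 * (2 * (a / k) * a + (a / k)^2 * K) = a^2 * (2 * k + K)"
    using k by (simp add: field_simps power2_eq_square)
  moreover have "k^2 * (2 * (a / k) * a + (a / k)^2 * K) \<le> 0"
    using assms[of "a / k"] by (simp add: mult_nonneg_nonpos)
  ultimately have "a^2 * (2 * k + K) \<le> 0" by simp
  then have "a^2 \<le> 0" using k by (simp add: mult_le_0_iff)
  then show ?thesis by simp
qed

lemma symmetric_matrix_inner: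
  fixes Q :: "real^'n^'n"
  assumes "transpose Q = Q"
  shows "x \<bullet> (Q *v y) = (Q *v x) \<bullet> y"
  by (metis assms dot_lmul_matrix vector_transpose_matrix)

lemma symmetric_matrix_rayleigh_max_eigenvector:
  fixes Q :: "real^'n^'n"
  assumes sym: "transpose Q = Q" and S: "subspace S" and inv: "\<And>x. x \<in> S \<Longrightarrow> Q *v x \<in> S"
    and v: "v \<in> S" "v \<bullet> v = 1" and rayleigh_max: "\<And>y. y \<in> S \<Longrightarrow> y \<bullet> (Q *v y) \<le> (v \<bullet> (Q *v v)) * (y \<bullet> y)"
  shows "Q *v v = (v \<bullet> (Q *v v)) *\<^sub>R v"
proof -
  define \<mu> where "\<mu> = v \<bullet> (Q *v v)"
  \<comment> \<open>first-order optimality of the Rayleigh quotient in every direction of S orthogonal to v\<close>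
  have orth: "u \<bullet> (Q *v v) = 0" if u: "u \<in> S" "u \<bullet> v = 0" for u
  proof (rule linear_coeff_zero_of_quadratic_nonpos)
    fix t :: real
    have "v + t *\<^sub>R u \<in> S" using v u S by (simp add: subspace_add subspace_scale)
    then have "(v + t *\<^sub>R u) \<bullet> (Q *v (v + t *\<^sub>R u)) \<le> \<mu> * ((v + t *\<^sub>R u) \<bullet> (v + t *\<^sub>R u))"
      unfolding \<mu>_def by (rule rayleigh_max)
    moreover have "v \<bullet> (Q *v u) = u \<bullet> (Q *v v)"
      using symmetric_matrix_inner[OF sym, of v u] by (simp add: inner_commute)
    ultimately show "2 * t * (u \<bullet> (Q *v v)) + t^2 * (u \<bullet> (Q *v u) - \<mu> * (u \<bullet> u)) \<le> 0"
      using v u unfolding \<mu>_def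
      by (simp add: matrix_vector_right_distrib matrix_vector_mult_scaleR inner_add_left
          inner_add_right inner_commute power2_eq_square algebra_simps)
  qed
  define r where "r = Q *v v - \<mu> *\<^sub>R v"
  have "r \<in> S" unfolding r_def using inv v S by (simp add: subspace_diff subspace_scale)
  moreover have "r \<bullet> v = (Q *v v) \<bullet> v - \<mu> * (v \<bullet> v)" unfolding r_def by (simp add: inner_diff_left)
  then have rv: "r \<bullet> v = 0" unfolding \<mu>_def using v(2) inner_commute[of "Q *v v" v] by simp
  ultimately have "r \<bullet> r = 0"
    using orth by (simp add: r_def inner_diff_right)
  then show ?thesis unfolding r_def \<mu>_def by simp
qed

lemma symmetric_matrix_eigenvector_in_invariant_subspace:
  fixes Q :: "real^'n^'n"
  assumes sym: "transpose Q = Q" and S: "subspace S" "S \<noteq> {0}" and inv: "\<And>x. x \<in> S \<Longrightarrow> Q *v x \<in> S"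
  obtains v where "v \<in> S" "norm v = 1" "Q *v v = (v \<bullet> (Q *v v)) *\<^sub>R v"
proof -
  define K where "K = S \<inter> sphere 0 1"
  have "compact K" unfolding K_def
    using closed_subspace[OF S(1)] by (metis Int_commute compact_Int_closed compact_sphere)
  moreover obtain x where x: "x \<in> S" "x \<noteq> 0" using S subspace_0 by blast
  then have "x /\<^sub>R norm x \<in> K" unfolding K_def using S(1) by (simp add: subspace_scale)
  ultimately obtain v where v: "v \<in> K" and vmax: "\<And>y. y \<in> K \<Longrightarrow> y \<bullet> (Q *v y) \<le> v \<bullet> (Q *v v)"
    using continuous_attains_sup[of K "\<lambda>x. x \<bullet> (Q *v x)"] by (fastforce intro: continuous_intros)
  have vS: "v \<in> S" and nv: "norm v = 1" using v unfolding K_def by auto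
  have "y \<bullet> (Q *v y) \<le> (v \<bullet> (Q *v v)) * (y \<bullet> y)" if "y \<in> S" for y
  proof (cases "y = 0")
    case False
    then have "y /\<^sub>R norm y \<in> K" unfolding K_def using that S(1) by (simp add: subspace_scale)
    then have "(y /\<^sub>R norm y) \<bullet> (Q *v (y /\<^sub>R norm y)) \<le> v \<bullet> (Q *v v)" by (rule vmax)
    moreover have "(y /\<^sub>R norm y) \<bullet> (Q *v (y /\<^sub>R norm y)) = (y \<bullet> (Q *v y)) / (norm y)^2"
      by (simp add: matrix_vector_mult_scaleR power2_eq_square field_simps)
    ultimately have "(y \<bullet> (Q *v y)) / (norm y)^2 \<le> v \<bullet> (Q *v v)" by simp
    then show ?thesis using False by (simp add: dot_square_norm field_simps)
  qed simp
  then have "Q *v v = (v \<bullet> (Q *v v)) *\<^sub>R v"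
    using symmetric_matrix_rayleigh_max_eigenvector[OF sym S(1) inv vS] nv by (simp add: dot_square_norm)
  with vS nv show ?thesis by (rule that)
qed

lemma symmetric_matrix_orthogonal_invariant:
  fixes Q :: "real^'n^'n"
  assumes "transpose Q = Q" "Q *v v = \<mu> *\<^sub>R v" "v \<bullet> x = 0"
  shows "v \<bullet> (Q *v x) = 0"
  using symmetric_matrix_inner[OF assms(1), of v x] assms(2,3) by simp

lemma symmetric_matrix_orthonormal_eigenvectors_span:
  fixes Q :: "real^'n^'n"
  assumes sym: "transpose Q = Q" and "subspace S" and "\<And>x. x \<in> S \<Longrightarrow> Q *v x \<in> S"
  shows "\<exists>B. B \<subseteq> S \<and> pairwise orthogonal B \<and>
     (\<forall>b\<in>B. norm b = 1 \<and> Q *v b = (b \<bullet> (Q *v b)) *\<^sub>R b) \<and> S \<subseteq> span B"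
  using assms(2,3)
proof (induction "dim S" arbitrary: S rule: less_induct)
  case less
  show ?case
  proof (cases "S = {0}")
    case True
    then show ?thesis by (intro exI[of _ "{}"]) auto
  next
    case False
    obtain v where v: "v \<in> S" "norm v = 1" "Q *v v = (v \<bullet> (Q *v v)) *\<^sub>R v"
      using symmetric_matrix_eigenvector_in_invariant_subspace[OF sym less.prems(1) False less.prems(2)] .
    have vv: "v \<bullet> v = 1" using v(2) by (simp add: dot_square_norm)
    define S' where "S' = S \<inter> {x. v \<bullet> x = 0}"
    have S': "subspace S'" unfolding S'_def
      by (intro subspace_inter less.prems(1)) (auto simp: subspace_def inner_add_right)
    have "Q *v x \<in> S'" if "x \<in> S'" for x
      using that symmetric_matrix_orthogonal_invariant[OF sym v(3), of x] less.prems(2)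
      unfolding S'_def by simp
    moreover have "dim S' < dim S"
    proof (rule dim_psubset)
      have "v \<notin> S'" "S' \<subseteq> S" unfolding S'_def using vv by auto
      moreover have "span S' = S'" "span S = S" using S' less.prems(1) by simp_all
      ultimately show "span S' \<subset> span S" using v(1) by (simp only:) blast
    qed
    ultimately obtain B where B: "B \<subseteq> S'" "pairwise orthogonal B"
      "\<forall>b\<in>B. norm b = 1 \<and> Q *v b = (b \<bullet> (Q *v b)) *\<^sub>R b" "S' \<subseteq> span B"
      using less.hyps S' by blast
    have "S \<subseteq> span (insert v B)"
    proof
      fix x assume x: "x \<in> S"
      have "x - (v \<bullet> x) *\<^sub>R v \<in> S'"
        using x v(1) vv less.prems(1) unfolding S'_def by (simp add: subspace_diff subspace_scale inner_diff_right)
      then have "x - (v \<bullet> x) *\<^sub>R v \<in> span (insert v B)" using B(4) span_mono[of B "insert v B"] by blast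
      moreover have "(v \<bullet> x) *\<^sub>R v \<in> span (insert v B)" by (simp add: span_base span_scale)
      ultimately have "x - (v \<bullet> x) *\<^sub>R v + (v \<bullet> x) *\<^sub>R v \<in> span (insert v B)" by (rule span_add)
      then show "x \<in> span (insert v B)" by simp
    qed
    moreover have "pairwise orthogonal (insert v B)"
      using B(1,2) unfolding S'_def by (auto simp: pairwise_insert orthogonal_def inner_commute)
    ultimately show ?thesis using B v(1,2,3) unfolding S'_def by (intro exI[of _ "insert v B"]) auto
  qed
qed

lemma symmetric_matrix_orthonormal_eigenbasis:
  fixes Q :: "real^'n^'n"
  assumes sym: "transpose Q = Q"
  obtains B where "finite B" "card B \<le> CARD('n)"
     "\<And>b. b \<in> B \<Longrightarrow> norm b = 1" "\<And>b. b \<in> B \<Longrightarrow> Q *v b = (b \<bullet> (Q *v b)) *\<^sub>R b"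
     "\<And>x. (\<Sum>b\<in>B. (x \<bullet> b) *\<^sub>R b) = x"
proof -
  obtain B where B: "pairwise orthogonal B" "\<forall>b\<in>B. norm b = 1 \<and> Q *v b = (b \<bullet> (Q *v b)) *\<^sub>R b"
     "UNIV \<subseteq> span B"
    using symmetric_matrix_orthonormal_eigenvectors_span[OF sym, of UNIV] by auto
  have "independent B" using B(1,2) pairwise_orthogonal_independent by force
  from independent_bound[OF this] have fin: "finite B" "card B \<le> CARD('n)" by auto
  moreover have "(\<Sum>b\<in>B. (x \<bullet> b) *\<^sub>R b) = x" for x
    by (rule orthonormal_basis_expand) (use B fin in auto)
  ultimately show ?thesis using that B(2) by blast
qed

lemma norm_sq_orthonormal_expansion:
  fixes e :: "'a::real_inner"
  assumes "(\<Sum>b\<in>B. (e \<bullet> b) *\<^sub>R b) = e"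
  shows "(norm e)^2 = (\<Sum>b\<in>B. (b \<bullet> e)^2)"
proof -
  have "(norm e)^2 = e \<bullet> (\<Sum>b\<in>B. (e \<bullet> b) *\<^sub>R b)" using assms by (simp add: dot_square_norm)
  also have "\<dots> = (\<Sum>b\<in>B. (b \<bullet> e)^2)" by (simp add: inner_sum_right power2_eq_square inner_commute)
  finally show ?thesis .
qed

lemma quad_f_minimizer_gradient:
  fixes Q :: "real^'n^'n"
  assumes sym: "transpose Q = Q" and minimizer: "\<And>y. quad_f Q q xs \<le> quad_f Q q y"
  shows "Q *v xs = q"
proof -
  define g where "g = Q *v xs - q"
  have "- (g \<bullet> g) / 2 = 0"
  proof (rule linear_coeff_zero_of_quadratic_nonpos)
    fix t :: real
    have "xs \<bullet> (Q *v g) = g \<bullet> (Q *v xs)"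
      using symmetric_matrix_inner[OF sym, of xs g] by (simp add: inner_commute)
    then have expand: "quad_f Q q (xs + t *\<^sub>R g)
        = quad_f Q q xs + t * (g \<bullet> (Q *v xs) - q \<bullet> g) + t^2 / 2 * (g \<bullet> (Q *v g))"
      unfolding quad_f_def
      by (simp add: matrix_vector_right_distrib matrix_vector_mult_scaleR inner_add_left inner_add_right
          power2_eq_square algebra_simps inner_commute)
    have gg: "g \<bullet> (Q *v xs) - q \<bullet> g = g \<bullet> g" unfolding g_def by (simp add: inner_diff_right inner_commute)
    show "2 * t * (- (g \<bullet> g) / 2) + t^2 * (- (g \<bullet> (Q *v g)) / 2) \<le> 0"
      using minimizer[of "xs + t *\<^sub>R g"] unfolding expand gg by (simp add: algebra_simps)
  qed
  then show ?thesis unfolding g_def by simp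
qed

section \<open>Spectrum of the momentum iteration matrix\<close>

(* The restriction of momA to the span of (u,0), (0,u) for an eigenvector u of Q with eigenvalue lam
   is the 2x2 matrix [[0, 1], [-mode_det, mode_trace]]. *)
definition mode_trace :: "real \<Rightarrow> real \<Rightarrow> real \<Rightarrow> real \<Rightarrow> real" where
  "mode_trace \<alpha> \<beta> \<gamma> lam = 1 + \<beta> - (1 + \<gamma>) * \<alpha> * lam"

definition mode_det :: "real \<Rightarrow> real \<Rightarrow> real \<Rightarrow> real \<Rightarrow> real" where
  "mode_det \<alpha> \<beta> \<gamma> lam = \<beta> - \<gamma> * \<alpha> * lam"

lemma cplx_eigenvalue_le_spectral_rad:
  fixes A :: "complex^'k^'k"
  assumes "cplx_eigenvalue A z"
  shows "cmod z \<le> spectral_rad A"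
proof -
  obtain K where K: "\<And>x. norm (A *v x) \<le> norm x * K"
    using bounded_linear.bounded[OF matrix_vector_mul_bounded_linear[of A]] by blast
  have norm_smult: "norm (c *s v) = cmod c * norm v" for c and v :: "complex^'k"
    unfolding norm_vec_def by (simp add: L2_set_right_distrib norm_mult)
  have "bdd_above {cmod c | c. cplx_eigenvalue A c}"
  proof (rule bdd_aboveI)
    fix r assume "r \<in> {cmod c | c. cplx_eigenvalue A c}"
    then obtain c v where r: "r = cmod c" "v \<noteq> 0" "A *v v = c *s v" unfolding cplx_eigenvalue_def by blast
    have "cmod c * norm v \<le> K * norm v" using K[of v] r by (simp add: norm_smult mult.commute)
    then show "r \<le> K" using r by simp
  qed
  then show ?thesis unfolding spectral_rad_def using assms by (intro cSup_upper) auto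
qed

lemma eigenvector_affine_component_complex:
  fixes Q :: "real^'n^'n"
  assumes "Q *v u = lam *\<^sub>R u"
  shows "(\<Sum>b\<in>UNIV. complex_of_real (p * (if a = b then 1 else 0) + r * Q$a$b) * of_real (u$b))
      = of_real ((p + r * lam) * u$a)"
proof -
  have Qu: "(\<Sum>b\<in>UNIV. Q$a$b * u$b) = lam * u$a"
    using arg_cong[OF assms, of "\<lambda>x. x$a"] by (simp add: matrix_vector_mult_def)
  have "(\<Sum>b\<in>UNIV. complex_of_real (p * (if a = b then 1 else 0) + r * Q$a$b) * of_real (u$b))
      = of_real (\<Sum>b\<in>UNIV. (p * (if a = b then 1 else 0) + r * Q$a$b) * u$b)"
    by (simp only: of_real_sum of_real_mult)
  also have "(\<Sum>b\<in>UNIV. (p * (if a = b then 1 else 0) + r * Q$a$b) * u$b)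
      = (\<Sum>b\<in>UNIV. (if a = b then p * u$b else 0) + r * (Q$a$b * u$b))"
    by (rule sum.cong) (auto simp: algebra_simps)
  also have "\<dots> = (p + r * lam) * u$a"
    by (simp add: sum.distrib sum_distrib_left[symmetric] Qu) (simp add: algebra_simps)
  finally show ?thesis .
qed

lemma momA_eigenvalue_of_mode_root:
  fixes Q :: "real^'n^'n" and z :: complex
  assumes u: "u \<noteq> 0" "Q *v u = lam *\<^sub>R u"
    and z: "z^2 - of_real (mode_trace \<alpha> \<beta> \<gamma> lam) * z + of_real (mode_det \<alpha> \<beta> \<gamma> lam) = 0"
  shows "cplx_eigenvalue (momA \<alpha> \<beta> \<gamma> Q) z"
proof -
  define V :: "complex^('n+'n)" where
    "V = (\<chi> i. case i of Inl a \<Rightarrow> of_real (u$a) | Inr a \<Rightarrow> z * of_real (u$a))"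
  note row = eigenvector_affine_component_complex[OF u(2)]
  have "(momA \<alpha> \<beta> \<gamma> Q *v V) $ i = (z *s V) $ i" for i
  proof (cases i)
    case (Inl a)
    then show ?thesis
      by (simp add: matrix_vector_mult_def momA_def V_def sum.Plus if_distrib[of "\<lambda>x. x * _"]
          cong: if_cong flip: UNIV_Plus_UNIV)
  next
    case (Inr a)
    have "(momA \<alpha> \<beta> \<gamma> Q *v V) $ i
        = (\<Sum>b\<in>UNIV. complex_of_real (- \<beta> * (if a = b then 1 else 0) + \<gamma> * \<alpha> * Q$a$b) * of_real (u$b))
          + z * (\<Sum>b\<in>UNIV. complex_of_real ((1 + \<beta>) * (if a = b then 1 else 0) + (- (1 + \<gamma>) * \<alpha>) * Q$a$b) * of_real (u$b))"
      by (simp add: Inr matrix_vector_mult_def momA_def V_def sum.Plus sum_distrib_left algebra_simps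
          flip: UNIV_Plus_UNIV)
    also have "\<dots> = z * (z * of_real (u$a))
          - (z^2 - of_real (mode_trace \<alpha> \<beta> \<gamma> lam) * z + of_real (mode_det \<alpha> \<beta> \<gamma> lam)) * of_real (u$a)"
      unfolding row mode_trace_def mode_det_def by (simp add: algebra_simps power2_eq_square)
    also have "\<dots> = (z *s V) $ i" using z by (simp add: Inr V_def)
    finally show ?thesis .
  qed
  moreover have "V \<noteq> 0"
  proof
    assume "V = 0"
    have "V $ Inl a = of_real (u$a)" for a unfolding V_def by simp
    then have "u$a = 0" for a using \<open>V = 0\<close> by (metis of_real_eq_0_iff zero_index)
    with u(1) show False by (simp add: vec_eq_iff)
  qed
  ultimately show ?thesis unfolding cplx_eigenvalue_def by (metis vec_eq_iff)
qed

section \<open>Linear recurrences driven by white noise\<close>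

definition white_noise :: "'a measure \<Rightarrow> (nat \<Rightarrow> 'a \<Rightarrow> real) \<Rightarrow> bool" where
  "white_noise M \<xi> \<longleftrightarrow>
     (\<forall>t. integrable M (\<xi> t) \<and> integral\<^sup>L M (\<xi> t) = 0) \<and>
     (\<forall>t u. integrable M (\<lambda>\<omega>. \<xi> t \<omega> * \<xi> u \<omega>) \<and>
        integral\<^sup>L M (\<lambda>\<omega>. \<xi> t \<omega> * \<xi> u \<omega>) = (if t = u then 1 else 0))"

lemma white_noise_inner_unit:
  fixes w :: "nat \<Rightarrow> 'a \<Rightarrow> real^'n" and b :: "real^'n"
  assumes mean: "\<forall>t i. integrable M (\<lambda>\<omega>. w t \<omega> $ i) \<and> integral\<^sup>L M (\<lambda>\<omega>. w t \<omega> $ i) = 0"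
    and cov: "\<forall>t s i j. integrable M (\<lambda>\<omega>. w t \<omega> $ i * w s \<omega> $ j) \<and>
                  integral\<^sup>L M (\<lambda>\<omega>. w t \<omega> $ i * w s \<omega> $ j) = (if t = s \<and> i = j then 1 else 0)"
    and b: "norm b = 1"
  shows "white_noise M (\<lambda>t \<omega>. b \<bullet> w t \<omega>)"
proof -
  have lin: "b \<bullet> w t \<omega> = (\<Sum>i\<in>UNIV. b$i * w t \<omega> $ i)" for t \<omega> by (simp add: inner_vec_def)
  have quad: "(b \<bullet> w t \<omega>) * (b \<bullet> w u \<omega>) = (\<Sum>i\<in>UNIV. \<Sum>j\<in>UNIV. (b$i * b$j) * (w t \<omega> $ i * w u \<omega> $ j))"
    for t u \<omega> unfolding lin sum_product by (simp add: algebra_simps)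
  have "integral\<^sup>L M (\<lambda>\<omega>. (b \<bullet> w t \<omega>) * (b \<bullet> w u \<omega>))
      = (\<Sum>i\<in>UNIV. \<Sum>j\<in>UNIV. (b$i * b$j) * (if t = u \<and> i = j then 1 else 0))" for t u
    unfolding quad using cov by (simp add: integral_sum)
  also have "\<dots> t u = (if t = u then b \<bullet> b else 0)" for t u
    by (simp add: inner_vec_def if_distrib[of "\<lambda>x. _ * x"] sum.If_cases cong: if_cong)
  moreover have "integrable M (\<lambda>\<omega>. b \<bullet> w t \<omega>)" "integral\<^sup>L M (\<lambda>\<omega>. b \<bullet> w t \<omega>) = 0" for t
    unfolding lin using mean by (simp_all add: integral_sum)
  moreover have "integrable M (\<lambda>\<omega>. (b \<bullet> w t \<omega>) * (b \<bullet> w u \<omega>))" for t u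
    unfolding quad using cov by simp
  ultimately show ?thesis unfolding white_noise_def using b by (simp add: dot_square_norm)
qed

lemma lin_rec2_forced:
  fixes y \<xi> :: "nat \<Rightarrow> 'a \<Rightarrow> real"
  assumes rec: "\<And>t \<omega>. y (t + 2) \<omega> = c * y (t + 1) \<omega> - d * y t \<omega> + s * \<xi> t \<omega>"
    and y0: "\<And>\<omega>. y 0 \<omega> = a0" and y1: "\<And>\<omega>. y 1 \<omega> = a1"
  shows "y k \<omega> = lin_rec2 c d a0 a1 k + s * (\<Sum>j<k. lin_rec2 c d 0 1 (k - 1 - j) * \<xi> j \<omega>)"
proof (induction k rule: induct_nat_012)
  case (ge2 k)
  let ?H = "lin_rec2 c d 0 1"
  have "(\<Sum>j<Suc (Suc k). ?H (Suc (Suc k) - 1 - j) * \<xi> j \<omega>) = (\<Sum>j<k. ?H (Suc k - j) * \<xi> j \<omega>) + \<xi> k \<omega>"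
    by simp
  also have "(\<Sum>j<k. ?H (Suc k - j) * \<xi> j \<omega>)
      = (\<Sum>j<k. c * (?H (k - j) * \<xi> j \<omega>) - d * (?H (k - 1 - j) * \<xi> j \<omega>))"
  proof (rule sum.cong)
    fix j assume "j \<in> {..<k}"
    then have "Suc k - j = Suc (Suc (k - 1 - j))" "k - j = Suc (k - 1 - j)" by auto
    then show "?H (Suc k - j) * \<xi> j \<omega> = c * (?H (k - j) * \<xi> j \<omega>) - d * (?H (k - 1 - j) * \<xi> j \<omega>)"
      by (simp add: algebra_simps)
  qed simp
  also have "\<dots> = c * (\<Sum>j<Suc k. ?H (Suc k - 1 - j) * \<xi> j \<omega>) - d * (\<Sum>j<k. ?H (k - 1 - j) * \<xi> j \<omega>)"
    by (simp add: sum_subtractf sum_distrib_left)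
  finally have conv: "(\<Sum>j<Suc (Suc k). ?H (Suc (Suc k) - 1 - j) * \<xi> j \<omega>)
      = c * (\<Sum>j<Suc k. ?H (Suc k - 1 - j) * \<xi> j \<omega>) - d * (\<Sum>j<k. ?H (k - 1 - j) * \<xi> j \<omega>) + \<xi> k \<omega>" .
  have "y (Suc (Suc k)) \<omega> = c * y (Suc k) \<omega> - d * y k \<omega> + s * \<xi> k \<omega>"
    using rec[of k \<omega>] by (simp add: numeral_2_eq_2)
  also have "\<dots> = lin_rec2 c d a0 a1 (Suc (Suc k)) + s * (\<Sum>j<Suc (Suc k). ?H (Suc (Suc k) - 1 - j) * \<xi> j \<omega>)"
    unfolding conv ge2 by (simp add: algebra_simps)
  finally show ?case .
qed (use y0 y1 in simp_all)

lemma (in prob_space) white_noise_mean_square: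
  fixes \<xi> :: "nat \<Rightarrow> 'a \<Rightarrow> real"
  assumes "white_noise M \<xi>"
  shows "integrable M (\<lambda>\<omega>. (g + s * (\<Sum>j<k. h j * \<xi> j \<omega>))^2)"
    "expectation (\<lambda>\<omega>. (g + s * (\<Sum>j<k. h j * \<xi> j \<omega>))^2) = g^2 + s^2 * (\<Sum>j<k. (h j)^2)"
proof -
  have xi: "integrable M (\<xi> t)" "expectation (\<xi> t) = 0"
    "integrable M (\<lambda>\<omega>. \<xi> t \<omega> * \<xi> u \<omega>)" "expectation (\<lambda>\<omega>. \<xi> t \<omega> * \<xi> u \<omega>) = (if t = u then 1 else 0)"
    for t u using assms unfolding white_noise_def by auto
  define Z where "Z \<omega> = (\<Sum>j<k. h j * \<xi> j \<omega>)" for \<omega>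
  have Z2: "(Z \<omega>)^2 = (\<Sum>j<k. \<Sum>l<k. (h j * h l) * (\<xi> j \<omega> * \<xi> l \<omega>))" for \<omega>
    unfolding Z_def power2_eq_square sum_product by (simp add: algebra_simps)
  have sq: "(g + s * Z \<omega>)^2 = g^2 + (2 * g * s) * Z \<omega> + s^2 * (Z \<omega>)^2" for \<omega>
    by (simp add: power2_eq_square algebra_simps)
  have iZ: "integrable M Z" "integrable M (\<lambda>\<omega>. (Z \<omega>)^2)" unfolding Z2 unfolding Z_def using xi by auto
  have "expectation Z = 0" unfolding Z_def using xi by (simp add: integral_sum)
  moreover have "expectation (\<lambda>\<omega>. (Z \<omega>)^2) = (\<Sum>j<k. \<Sum>l<k. (h j * h l) * (if j = l then 1 else 0))"
    unfolding Z2 using xi by (simp add: integral_sum)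
  then have "expectation (\<lambda>\<omega>. (Z \<omega>)^2) = (\<Sum>j<k. (h j)^2)"
    by (simp add: power2_eq_square if_distrib cong: if_cong)
  ultimately show "integrable M (\<lambda>\<omega>. (g + s * (\<Sum>j<k. h j * \<xi> j \<omega>))^2)"
    "expectation (\<lambda>\<omega>. (g + s * (\<Sum>j<k. h j * \<xi> j \<omega>))^2) = g^2 + s^2 * (\<Sum>j<k. (h j)^2)"
    using iZ unfolding Z_def[symmetric] sq by (simp_all add: prob_space)
qed

lemma (in prob_space) lin_rec2_forced_mean_square:
  fixes y \<xi> :: "nat \<Rightarrow> 'a \<Rightarrow> real"
  assumes "white_noise M \<xi>"
    and rec: "\<And>t \<omega>. y (t + 2) \<omega> = c * y (t + 1) \<omega> - d * y t \<omega> + s * \<xi> t \<omega>"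
    and y0: "\<And>\<omega>. y 0 \<omega> = a0" and y1: "\<And>\<omega>. y 1 \<omega> = a1"
  shows "integrable M (\<lambda>\<omega>. (y k \<omega>)^2)"
    "expectation (\<lambda>\<omega>. (y k \<omega>)^2) = (lin_rec2 c d a0 a1 k)^2 + s^2 * (\<Sum>t<k. (lin_rec2 c d 0 1 t)^2)"
proof -
  have yk: "y k = (\<lambda>\<omega>. lin_rec2 c d a0 a1 k + s * (\<Sum>j<k. lin_rec2 c d 0 1 (k - 1 - j) * \<xi> j \<omega>))"
    using lin_rec2_forced[where y = y and \<xi> = \<xi>, OF rec y0 y1] by blast
  have "(\<Sum>j<k. (lin_rec2 c d 0 1 (k - 1 - j))^2) = (\<Sum>t<k. (lin_rec2 c d 0 1 t)^2)"
    using sum.nat_diff_reindex[of "\<lambda>t. (lin_rec2 c d 0 1 t)^2" k] by simp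
  then show "integrable M (\<lambda>\<omega>. (y k \<omega>)^2)"
    "expectation (\<lambda>\<omega>. (y k \<omega>)^2) = (lin_rec2 c d a0 a1 k)^2 + s^2 * (\<Sum>t<k. (lin_rec2 c d 0 1 t)^2)"
    using white_noise_mean_square[OF assms(1)] unfolding yk by simp_all
qed

lemma (in prob_space) lin_rec2_forced_mean_square_tendsto:
  fixes y \<xi> :: "nat \<Rightarrow> 'a \<Rightarrow> real"
  assumes "schur_stable2 c d" "white_noise M \<xi>"
    and "\<And>t \<omega>. y (t + 2) \<omega> = c * y (t + 1) \<omega> - d * y t \<omega> + s * \<xi> t \<omega>"
    and "\<And>\<omega>. y 0 \<omega> = a0" and "\<And>\<omega>. y 1 \<omega> = a1"
  shows "(\<lambda>k. expectation (\<lambda>\<omega>. (y k \<omega>)^2)) \<longlonglongrightarrow> s^2 * impulse_energy c d"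
proof -
  have "summable (\<lambda>k. (lin_rec2 c d a0 a1 k)^2)"
    using lin_rec2_squares_sums[OF assms(1)] by (rule sums_summable)
  then have "(\<lambda>k. (lin_rec2 c d a0 a1 k)^2) \<longlonglongrightarrow> 0" by (rule summable_LIMSEQ_zero)
  moreover have "(\<lambda>k. \<Sum>t<k. (lin_rec2 c d 0 1 t)^2) \<longlonglongrightarrow> impulse_energy c d"
    using impulse_response_sums[OF assms(1)] by (simp add: sums_def)
  ultimately have "(\<lambda>k. (lin_rec2 c d a0 a1 k)^2 + s^2 * (\<Sum>t<k. (lin_rec2 c d 0 1 t)^2))
      \<longlonglongrightarrow> 0 + s^2 * impulse_energy c d"
    by (intro tendsto_intros)
  then show ?thesis using lin_rec2_forced_mean_square(2)[OF assms(2-)] by simp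
qed

lemma cesaro_mean_tendsto_zero:
  fixes a :: "nat \<Rightarrow> real"
  assumes "a \<longlonglongrightarrow> 0"
  shows "(\<lambda>t. (\<Sum>k\<le>t. a k) / real t) \<longlonglongrightarrow> 0"
proof (rule LIMSEQ_I)
  fix r :: real assume r: "0 < r"
  obtain N where N: "\<And>k. N \<le> k \<Longrightarrow> \<bar>a k\<bar> < r / 4"
    using LIMSEQ_D[OF assms, of "r / 4"] r by auto
  define C where "C = (\<Sum>k<N. \<bar>a k\<bar>)"
  obtain T where T: "4 * C / r + 1 < real T" using reals_Archimedean2 by blast
  have "\<bar>(\<Sum>k\<le>t. a k) / real t\<bar> < r" if t: "max (max N T) 1 \<le> t" for t
  proof -
    have "\<bar>\<Sum>k\<le>t. a k\<bar> \<le> (\<Sum>k\<le>t. (if k \<in> {..<N} then \<bar>a k\<bar> else 0) + r / 4)"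
      using N r by (intro order.trans[OF sum_abs] sum_mono) (auto simp: less_imp_le)
    also have "\<dots> = C + real (Suc t) * (r / 4)"
    proof -
      have "{..t} \<inter> {..<N} = {..<N}" using t by auto
      then show ?thesis unfolding C_def sum.distrib sum.inter_restrict[OF finite_atMost, symmetric] by simp
    qed
    also have "\<dots> < real t * r"
    proof -
      have "4 * C / r < real t" using T t by linarith
      then have "C < real t * r / 4" using r by (simp add: field_simps)
      moreover have "real (Suc t) * (r / 4) \<le> real t * r / 2" using t r by (simp add: field_simps)
      moreover have "0 < real t * r" using t r by simp
      ultimately show ?thesis by linarith
    qed
    finally show ?thesis using t by (simp add: field_simps)
  qed
  then show "\<exists>t0. \<forall>t\<ge>t0. norm ((\<Sum>k\<le>t. a k) / real t - 0) < r"
    by (intro exI[of _ "max (max N T) 1"] allI impI) simp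
qed

lemma cesaro_mean_tendsto:
  fixes a :: "nat \<Rightarrow> real"
  assumes "a \<longlonglongrightarrow> l"
  shows "(\<lambda>t. 1 / real t * (\<Sum>k\<le>t. a k)) \<longlonglongrightarrow> l"
proof -
  have "(\<lambda>k. a k - l) \<longlonglongrightarrow> 0" using tendsto_diff[OF assms tendsto_const[of l]] by simp
  then have "(\<lambda>t. (\<Sum>k\<le>t. a k - l) / real t + (real (Suc t) / real t) * l) \<longlonglongrightarrow> 0 + 1 * l"
    by (intro tendsto_add tendsto_mult cesaro_mean_tendsto_zero LIMSEQ_Suc_n_over_n tendsto_const)
  moreover have "\<forall>\<^sub>F t in sequentially.
      (\<Sum>k\<le>t. a k - l) / real t + (real (Suc t) / real t) * l = 1 / real t * (\<Sum>k\<le>t. a k)"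
    by (rule eventually_sequentiallyI[of 1]) (simp add: sum_subtractf field_simps)
  ultimately show ?thesis by (simp add: Lim_transform_eventually)
qed

section \<open>Noise amplification of the momentum method\<close>

lemma noise_amplification_eq_sum_modes:
  fixes x :: "nat \<Rightarrow> 'w \<Rightarrow> real^'n" and B :: "(real^'n) set"
  assumes "finite B" and parseval: "\<And>e. (norm e)^2 = (\<Sum>b\<in>B. (b \<bullet> e)^2)"
    and int: "\<And>b k. b \<in> B \<Longrightarrow> integrable M (\<lambda>\<omega>. (b \<bullet> (x k \<omega> - xs))^2)"
    and lim: "\<And>b. b \<in> B \<Longrightarrow> (\<lambda>k. integral\<^sup>L M (\<lambda>\<omega>. (b \<bullet> (x k \<omega> - xs))^2)) \<longlonglongrightarrow> l b"
  shows "noise_amplification M x xs = (\<Sum>b\<in>B. l b)"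
proof -
  have "integral\<^sup>L M (\<lambda>\<omega>. (norm (x k \<omega> - xs))^2) = (\<Sum>b\<in>B. integral\<^sup>L M (\<lambda>\<omega>. (b \<bullet> (x k \<omega> - xs))^2))" for k
    unfolding parseval using int by (simp add: integral_sum)
  then have "(\<lambda>k. integral\<^sup>L M (\<lambda>\<omega>. (norm (x k \<omega> - xs))^2)) \<longlonglongrightarrow> (\<Sum>b\<in>B. l b)"
    using lim by (simp add: tendsto_sum)
  then show ?thesis unfolding noise_amplification_def by (intro limI cesaro_mean_tendsto)
qed

lemma momentum_mode_recurrence:
  fixes Q :: "real^'n^'n"
  assumes sym: "transpose Q = Q" and eig: "Q *v b = lam *\<^sub>R b" and opt: "Q *v xs = q"
    and step: "x2 = x1 + \<beta> *\<^sub>R (x1 - x0) - \<alpha> *\<^sub>R (Q *v (x1 + \<gamma> *\<^sub>R (x1 - x0)) - q) + s *\<^sub>R w"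
  shows "b \<bullet> (x2 - xs) = mode_trace \<alpha> \<beta> \<gamma> lam * (b \<bullet> (x1 - xs))
      - mode_det \<alpha> \<beta> \<gamma> lam * (b \<bullet> (x0 - xs)) + s * (b \<bullet> w)"
proof -
  have Qb: "b \<bullet> (Q *v v) = lam * (b \<bullet> v)" for v
    using symmetric_matrix_inner[OF sym, of b v] eig by simp
  have "b \<bullet> x2 = b \<bullet> x1 + \<beta> * (b \<bullet> x1 - b \<bullet> x0)
      - \<alpha> * (lam * (b \<bullet> x1 + \<gamma> * (b \<bullet> x1 - b \<bullet> x0)) - lam * (b \<bullet> xs)) + s * (b \<bullet> w)"
    unfolding step opt[symmetric] by (simp add: Qb inner_add_right inner_diff_right)
  then show ?thesis unfolding mode_trace_def mode_det_def by (simp add: inner_diff_right algebra_simps)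
qed

lemma (in prob_space) momentum_mode_mean_square_tendsto:
  fixes Q :: "real^'n^'n" and x w :: "nat \<Rightarrow> 'a \<Rightarrow> real^'n"
  assumes sym: "transpose Q = Q" and eig: "Q *v b = lam *\<^sub>R b" and opt: "Q *v xs = q"
    and stable: "schur_stable2 (mode_trace \<alpha> \<beta> \<gamma> lam) (mode_det \<alpha> \<beta> \<gamma> lam)"
    and noise: "white_noise M (\<lambda>t \<omega>. b \<bullet> w t \<omega>)"
    and x0: "\<forall>\<omega>. x 0 \<omega> = x0" and x1: "\<forall>\<omega>. x 1 \<omega> = x1"
    and xrec: "\<forall>t \<omega>. x (t + 2) \<omega> = x (t + 1) \<omega> + \<beta> *\<^sub>R (x (t + 1) \<omega> - x t \<omega>)
        - \<alpha> *\<^sub>R (Q *v (x (t + 1) \<omega> + \<gamma> *\<^sub>R (x (t + 1) \<omega> - x t \<omega>)) - q) + \<sigma>w *\<^sub>R w t \<omega>"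
  shows "integrable M (\<lambda>\<omega>. (b \<bullet> (x k \<omega> - xs))^2)"
    "(\<lambda>k. expectation (\<lambda>\<omega>. (b \<bullet> (x k \<omega> - xs))^2))
       \<longlonglongrightarrow> \<sigma>w^2 * impulse_energy (mode_trace \<alpha> \<beta> \<gamma> lam) (mode_det \<alpha> \<beta> \<gamma> lam)"
proof -
  have rec: "b \<bullet> (x (t + 2) \<omega> - xs) = mode_trace \<alpha> \<beta> \<gamma> lam * (b \<bullet> (x (t + 1) \<omega> - xs))
      - mode_det \<alpha> \<beta> \<gamma> lam * (b \<bullet> (x t \<omega> - xs)) + \<sigma>w * (b \<bullet> w t \<omega>)" for t \<omega>
    using xrec by (intro momentum_mode_recurrence[OF sym eig opt]) blast
  show "integrable M (\<lambda>\<omega>. (b \<bullet> (x k \<omega> - xs))^2)"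
    using lin_rec2_forced_mean_square(1)[OF noise, where y = "\<lambda>k \<omega>. b \<bullet> (x k \<omega> - xs)"] rec x0 x1 by simp
  show "(\<lambda>k. expectation (\<lambda>\<omega>. (b \<bullet> (x k \<omega> - xs))^2))
       \<longlonglongrightarrow> \<sigma>w^2 * impulse_energy (mode_trace \<alpha> \<beta> \<gamma> lam) (mode_det \<alpha> \<beta> \<gamma> lam)"
    using lin_rec2_forced_mean_square_tendsto[OF stable noise, where y = "\<lambda>k \<omega>. b \<bullet> (x k \<omega> - xs)"] rec x0 x1
    by simp
qed

lemma momA_mode_root_bounds:
  fixes Q :: "real^'n^'n"
  assumes u: "u \<noteq> 0" "Q *v u = lam *\<^sub>R u" and "0 < \<rho>" and sr: "spectral_rad (momA \<alpha> \<beta> \<gamma> Q) \<le> \<rho>"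
  shows "\<bar>mode_det \<alpha> \<beta> \<gamma> lam\<bar> \<le> \<rho>^2" "\<rho> * \<bar>mode_trace \<alpha> \<beta> \<gamma> lam\<bar> \<le> \<rho>^2 + mode_det \<alpha> \<beta> \<gamma> lam"
  using quadratic_roots_in_disc_coeff_bounds[OF \<open>0 < \<rho>\<close>] cplx_eigenvalue_le_spectral_rad
    momA_eigenvalue_of_mode_root[OF u] sr by (meson order.trans)+

lemma momentum_step_size_bound:
  fixes Q :: "real^'n^'n"
  assumes "u \<noteq> 0" "Q *v u = lam *\<^sub>R u" and r: "0 < \<rho>" "\<rho> < 1"
    and "spectral_rad (momA \<alpha> \<beta> \<gamma> Q) \<le> \<rho>"
  shows "0 \<le> \<alpha> * lam" "\<alpha> * lam \<le> (1 + \<rho>)^2"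
  using root_bounds_char_at_one[OF r momA_mode_root_bounds[OF assms(1,2,3,5)]]
  by (simp_all add: mode_trace_def mode_det_def algebra_simps)

lemma momentum_step_size_sq_bound:
  fixes Q :: "real^'n^'n"
  assumes "u \<noteq> 0" "Q *v u = L *\<^sub>R u" "0 < L" "0 < \<rho>" "\<rho> < 1"
    and "spectral_rad (momA \<alpha> \<beta> \<gamma> Q) \<le> \<rho>"
  shows "\<alpha>^2 \<le> (1 + \<rho>)^4 / L^2"
proof -
  from momentum_step_size_bound[OF assms(1,2,4-)] have "(\<alpha> * L)^2 \<le> ((1 + \<rho>)^2)^2"
    by (intro power_mono) auto
  then show ?thesis using \<open>0 < L\<close> by (simp add: field_simps power_mult_distrib flip: power_mult)
qed

lemma momentum_noise_amplification_le:
  fixes Q :: "real^'n^'n" and x w :: "nat \<Rightarrow> 'w \<Rightarrow> real^'n"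
  assumes rho: "0 < \<rho>" "\<rho> < 1" and sym: "transpose Q = Q" and opt: "Q *v xs = q"
    and sr: "spectral_rad (momA \<alpha> \<beta> \<gamma> Q) \<le> \<rho>" and P: "prob_space M"
    and w_mean: "\<forall>t i. integrable M (\<lambda>\<omega>. w t \<omega> $ i) \<and> integral\<^sup>L M (\<lambda>\<omega>. w t \<omega> $ i) = 0"
    and w_cov: "\<forall>t s i j. integrable M (\<lambda>\<omega>. w t \<omega> $ i * w s \<omega> $ j) \<and>
                  integral\<^sup>L M (\<lambda>\<omega>. w t \<omega> $ i * w s \<omega> $ j) = (if t = s \<and> i = j then 1 else 0)"
    and x0: "\<forall>\<omega>. x 0 \<omega> = x0" and x1: "\<forall>\<omega>. x 1 \<omega> = x1"
    and xrec: "\<forall>t \<omega>. x (t + 2) \<omega> = x (t + 1) \<omega> + \<beta> *\<^sub>R (x (t + 1) \<omega> - x t \<omega>)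
        - \<alpha> *\<^sub>R (Q *v (x (t + 1) \<omega> + \<gamma> *\<^sub>R (x (t + 1) \<omega> - x t \<omega>)) - q) + \<sigma>w *\<^sub>R w t \<omega>"
  shows "noise_amplification M x xs \<le> \<sigma>w^2 * (1 + \<rho>^2) / (1 + \<rho>)^3 * real CARD('n) * (1 / (1 - \<rho>))^3"
proof -
  obtain B where B: "finite B" "card B \<le> CARD('n)" "\<And>b. b \<in> B \<Longrightarrow> norm b = 1"
    "\<And>b. b \<in> B \<Longrightarrow> Q *v b = (b \<bullet> (Q *v b)) *\<^sub>R b" "\<And>e. (\<Sum>b\<in>B. (e \<bullet> b) *\<^sub>R b) = e"
    using symmetric_matrix_orthonormal_eigenbasis[OF sym] by blast
  have rho2: "0 < 1 - \<rho>^2" using rho by (simp add: power_less_one_iff)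
  define E where "E b = impulse_energy (mode_trace \<alpha> \<beta> \<gamma> (b \<bullet> (Q *v b))) (mode_det \<alpha> \<beta> \<gamma> (b \<bullet> (Q *v b)))" for b
  have roots: "\<bar>mode_det \<alpha> \<beta> \<gamma> (b \<bullet> (Q *v b))\<bar> \<le> \<rho>^2"
    "\<rho> * \<bar>mode_trace \<alpha> \<beta> \<gamma> (b \<bullet> (Q *v b))\<bar> \<le> \<rho>^2 + mode_det \<alpha> \<beta> \<gamma> (b \<bullet> (Q *v b))" if "b \<in> B" for b
    using momA_mode_root_bounds[OF _ B(4)[OF that] rho(1) sr] B(3)[OF that] by force+
  have "noise_amplification M x xs = (\<Sum>b\<in>B. \<sigma>w^2 * E b)"
  proof (rule noise_amplification_eq_sum_modes[OF B(1) norm_sq_orthonormal_expansion[OF B(5)]])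
    fix b assume b: "b \<in> B"
    note mode = prob_space.momentum_mode_mean_square_tendsto[OF P sym B(4)[OF b] opt
        root_bounds_schur_stable2[OF rho roots[OF b]] white_noise_inner_unit[OF w_mean w_cov B(3)[OF b]] x0 x1 xrec]
    show "integrable M (\<lambda>\<omega>. (b \<bullet> (x k \<omega> - xs))^2)" for k by (rule mode(1))
    show "(\<lambda>k. integral\<^sup>L M (\<lambda>\<omega>. (b \<bullet> (x k \<omega> - xs))^2)) \<longlonglongrightarrow> \<sigma>w^2 * E b"
      unfolding E_def by (rule mode(2))
  qed
  also have "\<dots> \<le> real (card B) * (\<sigma>w^2 * ((1 + \<rho>^2) / (1 - \<rho>^2)^3))"
    using impulse_energy_le_root_bound[OF rho roots] unfolding E_def
    by (intro sum_bounded_above mult_left_mono) auto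
  also have "\<dots> \<le> real CARD('n) * (\<sigma>w^2 * ((1 + \<rho>^2) / (1 - \<rho>^2)^3))"
    using B(2) rho2 by (intro mult_right_mono) simp_all
  also have "(1 + \<rho>^2) / (1 - \<rho>^2)^3 = (1 + \<rho>^2) / (1 + \<rho>)^3 * (1 / (1 - \<rho>))^3"
    by (simp add: power_one_over power_mult_distrib[symmetric] algebra_simps power2_eq_square)
  also have "real CARD('n) * (\<sigma>w^2 * ((1 + \<rho>^2) / (1 + \<rho>)^3 * (1 / (1 - \<rho>))^3))
      = \<sigma>w^2 * (1 + \<rho>^2) / (1 + \<rho>)^3 * real CARD('n) * (1 / (1 - \<rho>))^3"
    by (simp add: algebra_simps)
  finally show ?thesis .
qed

theorem theorem1:
  fixes m L \<alpha> \<beta> \<gamma> \<rho> \<sigma> \<sigma>w :: real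
    and Q :: "real^'n^'n" and q xs x0 x1 :: "real^'n"
    and M :: "'w measure" and w :: "nat \<Rightarrow> 'w \<Rightarrow> real^'n" and x :: "nat \<Rightarrow> 'w \<Rightarrow> real^'n"
  assumes mL: "0 < m" "m \<le> L"
    and rho: "0 < \<rho>" "\<rho> < 1"
    and conv: "\<forall>Q' :: real^'n^'n. in_QmL m L Q' \<longrightarrow> spectral_rad (momA \<alpha> \<beta> \<gamma> Q') \<le> \<rho>"
    and fQ: "in_QmL m L Q"
    and xs_min: "\<forall>y. quad_f Q q xs \<le> quad_f Q q y"
    and sigma: "0 < \<sigma>" "\<sigma>w = \<sigma> \<or> \<sigma>w = \<alpha> * \<sigma>"
    and P: "prob_space M"
    and w_meas: "\<forall>t. w t \<in> borel_measurable M"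
    and w_mean: "\<forall>t i. integrable M (\<lambda>\<omega>. w t \<omega> $ i) \<and> integral\<^sup>L M (\<lambda>\<omega>. w t \<omega> $ i) = 0"
    and w_cov: "\<forall>t s i j. integrable M (\<lambda>\<omega>. w t \<omega> $ i * w s \<omega> $ j) \<and>
                  integral\<^sup>L M (\<lambda>\<omega>. w t \<omega> $ i * w s \<omega> $ j) = (if t = s \<and> i = j then 1 else 0)"
    and x0: "\<forall>\<omega>. x 0 \<omega> = x0" and x1: "\<forall>\<omega>. x 1 \<omega> = x1"
    and xrec: "\<forall>t \<omega>. x (t + 2) \<omega> = x (t + 1) \<omega> + \<beta> *\<^sub>R (x (t + 1) \<omega> - x t \<omega>)
        - \<alpha> *\<^sub>R (Q *v (x (t + 1) \<omega> + \<gamma> *\<^sub>R (x (t + 1) \<omega> - x t \<omega>)) - q) + \<sigma>w *\<^sub>R w t \<omega>"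
  shows "noise_amplification M x xs
           \<le> \<sigma>w\<^sup>2 * (1 + \<rho>\<^sup>2) / (1 + \<rho>) ^ 3 * real CARD('n) * (1 / (1 - \<rho>)) ^ 3
    \<and> (\<sigma>w = \<alpha> * \<sigma> \<longrightarrow> noise_amplification M x xs
           \<le> \<sigma>\<^sup>2 * (1 + \<rho>) * (1 + \<rho>\<^sup>2) / L\<^sup>2 * real CARD('n) * (1 / (1 - \<rho>)) ^ 3)"
proof -
  have sym: "transpose Q = Q" using fQ unfolding in_QmL_def by blast
  have sr: "spectral_rad (momA \<alpha> \<beta> \<gamma> Q) \<le> \<rho>" using conv fQ by blast
  have opt: "Q *v xs = q" using quad_f_minimizer_gradient[OF sym] xs_min by blast
  define K where "K = (1 + \<rho>\<^sup>2) / (1 + \<rho>) ^ 3 * real CARD('n) * (1 / (1 - \<rho>)) ^ 3"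
  have J: "noise_amplification M x xs \<le> \<sigma>w\<^sup>2 * K"
    using momentum_noise_amplification_le[OF rho sym opt sr P w_mean w_cov x0 x1 xrec]
    unfolding K_def by (simp add: algebra_simps)
  obtain u where "u \<noteq> 0" "Q *v u = L *\<^sub>R u"
    using fQ unfolding in_QmL_def real_eigenvalue_def by (auto simp: scalar_mult_eq_scaleR)
  from momentum_step_size_sq_bound[OF this _ rho sr] mL have \<alpha>: "\<alpha>^2 \<le> (1 + \<rho>)^4 / L^2" by simp
  have "noise_amplification M x xs \<le> (1 + \<rho>)^4 / L^2 * \<sigma>^2 * K" if "\<sigma>w = \<alpha> * \<sigma>"
  proof -
    have "noise_amplification M x xs \<le> \<alpha>^2 * \<sigma>^2 * K" using J that by (simp add: power_mult_distrib)
    also have "\<dots> \<le> (1 + \<rho>)^4 / L^2 * \<sigma>^2 * K"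
      using \<alpha> rho unfolding K_def by (intro mult_right_mono) auto
    finally show ?thesis .
  qed
  moreover have "(1 + \<rho>)^4 / L^2 * \<sigma>^2 * K
      = \<sigma>\<^sup>2 * (1 + \<rho>) * (1 + \<rho>\<^sup>2) / L\<^sup>2 * real CARD('n) * (1 / (1 - \<rho>)) ^ 3"
  proof -
    have "(1 + \<rho>)^4 = (1 + \<rho>) * (1 + \<rho>)^3" by (simp add: eval_nat_numeral)
    moreover have "1 + \<rho> \<noteq> 0" "1 - \<rho> \<noteq> 0" "L \<noteq> 0" using rho mL by auto
    ultimately show ?thesis unfolding K_def by (simp add: field_simps)
  qed
  ultimately show ?thesis using J unfolding K_def by simp
qed

end
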